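(* Let $f$ be a norm on $\mathbb{R}^n$, $g$ a norm on $\mathbb{R}^m$, let $\lambda_1,\lambda_2,\alpha_{\bm{x}},\alpha_{\bm{v}}>0$, and let $C>0$ be an absolute constant. Define the cone $$\mathcal{C}(\lambda_1,\lambda_2)=\big\{(\bm{a},\bm{b})\in\mathbb{R}^n\times\mathbb{R}^m:\lambda_1f(\bm{a})+\lambda_2g(\bm{b})\le C\lambda_1\alpha_{\bm{x}}\|\bm{a}\|_2+C\lambda_2\alpha_{\bm{v}}\|\bm{b}\|_2\big\}$$ and $\mathcal{C}^*=\mathcal{C}(\lambda_1,\lambda_2)\cap\mathbb{S}^{n+m-1}$. Then $$\omega(\mathcal{C}^* )\lesssim\Big(\alpha_{\bm{x}}+\frac{\lambda_2\alpha_{\bm{v}}}{\lambda_1}\Big)\omega(\mathbb{B}_f^n)+\Big(\alpha_{\bm{v}}+\frac{\lambda_1\alpha_{\bm{x}}}{\lambda_2}\Big)\omega(\mathbb{B}_g^m).$$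
   Context: $\mathbb{B}_f^n=\{\bm{x}\in\mathbb{R}^n:f(\bm{x})\le1\}$, $\mathbb{B}_g^m$ similarly; $\mathbb{S}^{p-1}$ the Euclidean unit sphere. Gaussian width $\omega(\mathcal{K})=\mathbb{E}\sup_{\bm{x}\in\mathcal{K}}\langle\bm{g},\bm{x}\rangle$, $\bm{g}$ standard Gaussian. $A\lesssim B$ means $A\le C'B$ for an absolute constant $C'$. *)

theory Defs
  imports "HOL-Probability.Probability"
begin

text \<open>Vectors of R^n are represented as functions nat => real vanishing outside {..<n}.\<close>

definition vecs :: "nat \<Rightarrow> (nat \<Rightarrow> real) set" where
  "vecs n = {x. \<forall>i\<ge>n. x i = 0}"

definition l2 :: "nat \<Rightarrow> (nat \<Rightarrow> real) \<Rightarrow> real" where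
  "l2 n x = sqrt (\<Sum>i<n. (x i)\<^sup>2)"

definition is_norm_on :: "nat \<Rightarrow> ((nat \<Rightarrow> real) \<Rightarrow> real) \<Rightarrow> bool" where
  "is_norm_on n f \<longleftrightarrow>
     (\<forall>x\<in>vecs n. 0 \<le> f x \<and> (f x = 0 \<longleftrightarrow> x = (\<lambda>_. 0))) \<and>
     (\<forall>x\<in>vecs n. \<forall>c. f (\<lambda>i. c * x i) = \<bar>c\<bar> * f x) \<and>
     (\<forall>x\<in>vecs n. \<forall>y\<in>vecs n. f (\<lambda>i. x i + y i) \<le> f x + f y)"

definition norm_ball :: "nat \<Rightarrow> ((nat \<Rightarrow> real) \<Rightarrow> real) \<Rightarrow> (nat \<Rightarrow> real) set" where
  "norm_ball n f = {x \<in> vecs n. f x \<le> 1}"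

definition gauss :: "nat \<Rightarrow> (nat \<Rightarrow> real) measure" where
  "gauss n = PiM {..<n} (\<lambda>_. density lborel std_normal_density)"

text \<open>Gaussian width E sup_{x in K} <g,x>. Convention: the empty set gets width 0
  (mathematically -infinity).\<close>
definition gaussian_width :: "nat \<Rightarrow> (nat \<Rightarrow> real) set \<Rightarrow> real" where
  "gaussian_width n K =
     (if K = {} then 0 else
      integral\<^sup>L (gauss n) (\<lambda>g. SUP x\<in>K. \<Sum>i<n. g i * x i))"

text \<open>Identification of R^n x R^m with R^(n+m).\<close>
definition concat_vec :: "nat \<Rightarrow> (nat \<Rightarrow> real) \<Rightarrow> (nat \<Rightarrow> real) \<Rightarrow> (nat \<Rightarrow> real)" where
  "concat_vec n a b = (\<lambda>i. if i < n then a i else b (i - n))"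

definition cone_sphere ::
  "nat \<Rightarrow> nat \<Rightarrow> ((nat \<Rightarrow> real) \<Rightarrow> real) \<Rightarrow> ((nat \<Rightarrow> real) \<Rightarrow> real) \<Rightarrow>
   real \<Rightarrow> real \<Rightarrow> real \<Rightarrow> real \<Rightarrow> real \<Rightarrow> (nat \<Rightarrow> real) set" where
  "cone_sphere n m f g C lam1 lam2 ax av =
     {concat_vec n a b | a b. a \<in> vecs n \<and> b \<in> vecs m \<and>
        lam1 * f a + lam2 * g b \<le> C * lam1 * ax * l2 n a + C * lam2 * av * l2 m b \<and>
        (l2 n a)\<^sup>2 + (l2 m b)\<^sup>2 = 1}"

end

theory Submission
  imports Defs
begin

(* On the unit sphere ||a||_2 <= 1 and ||b||_2 <= 1, so the cone inequality gives
   lam1 f(a) + lam2 g(b) <= C (lam1 ax + lam2 av); both terms being nonnegative,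
   f(a) <= C (ax + lam2 av / lam1) and g(b) <= C (av + lam1 ax / lam2).
   For the support function h_f(G) = sup {<G,x> : f x <= 1} one has <G,a> <= f(a) h_f(G), so
   <G,(a,b)> <= C (ax + lam2 av / lam1) h_f(G_1) + C (av + lam1 ax / lam2) h_g(G_2)
   for the two blocks G_1, G_2 of G. Both blocks are standard Gaussian vectors, and the expected
   support functions are the widths of the unit balls, so the bound holds with constant C itself.
   The analytic work is the integrability of h_f: it is dominated by a multiple of ||G||_1 because
   f is equivalent to the l1 norm (compactness of the l1 sphere), and it is measurable as a
   supremum over a countable dense subset of the ball. *)

definition l1 :: "nat \<Rightarrow> (nat \<Rightarrow> real) \<Rightarrow> real" where
  "l1 n x = (\<Sum>i<n. \<bar>x i\<bar>)"

definition unit_vec :: "nat \<Rightarrow> nat \<Rightarrow> real" where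
  "unit_vec k = (\<lambda>j. if j = k then 1 else 0)"

lemma zero_in_vecs [simp]: "(\<lambda>_. 0) \<in> vecs n"
  by (simp add: vecs_def)

lemma is_norm_on_nonneg: "is_norm_on n f \<Longrightarrow> x \<in> vecs n \<Longrightarrow> 0 \<le> f x"
  unfolding is_norm_on_def by blast

lemma is_norm_on_eq_0_iff: "is_norm_on n f \<Longrightarrow> x \<in> vecs n \<Longrightarrow> f x = 0 \<longleftrightarrow> x = (\<lambda>_. 0)"
  unfolding is_norm_on_def by blast

lemma is_norm_on_scale:
  "is_norm_on n f \<Longrightarrow> x \<in> vecs n \<Longrightarrow> f (\<lambda>i. c * x i) = \<bar>c\<bar> * f x"
  unfolding is_norm_on_def by blast

lemma is_norm_on_triangle:
  "is_norm_on n f \<Longrightarrow> x \<in> vecs n \<Longrightarrow> y \<in> vecs n \<Longrightarrow> f (\<lambda>i. x i + y i) \<le> f x + f y"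
  unfolding is_norm_on_def by blast

lemma is_norm_on_zero: "is_norm_on n f \<Longrightarrow> f (\<lambda>_. 0) = 0"
  using is_norm_on_eq_0_iff zero_in_vecs by blast

lemma l1_nonneg: "0 \<le> l1 n x"
  by (simp add: l1_def sum_nonneg)

lemma abs_le_l1: "i < n \<Longrightarrow> \<bar>x i\<bar> \<le> l1 n x"
  unfolding l1_def by (rule member_le_sum) auto

lemma continuous_on_coordinate [continuous_intros]: "continuous_on S (\<lambda>x. x i)"
  by (rule continuous_on_subset[OF continuous_on_product_coordinates]) simp

lemma continuous_on_l1: "continuous_on S (l1 n)"
  unfolding l1_def[abs_def] by (intro continuous_intros)

lemma continuous_on_l1_diff: "continuous_on S (\<lambda>x. l1 n (\<lambda>i. x i - y i))"
  unfolding l1_def by (intro continuous_intros)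

lemma abs_inner_le_l1: "\<bar>\<Sum>i<n. G i * x i\<bar> \<le> (\<Sum>i<n. \<bar>G i\<bar>) * l1 n x"
proof -
  have "\<bar>\<Sum>i<n. G i * x i\<bar> \<le> (\<Sum>i<n. \<bar>G i\<bar> * \<bar>x i\<bar>)"
    using sum_abs[of "\<lambda>i. G i * x i" "{..<n}"] by (simp add: abs_mult)
  also have "\<dots> \<le> (\<Sum>i<n. \<bar>G i\<bar> * l1 n x)"
    by (intro sum_mono mult_left_mono abs_le_l1) auto
  finally show ?thesis by (simp add: sum_distrib_right)
qed

lemma is_norm_on_truncation_le:
  assumes N: "is_norm_on n f" and "k \<le> n"
  shows "f (\<lambda>j. if j < k then x j else 0) \<le> (\<Sum>i<k. \<bar>x i\<bar> * f (unit_vec i))"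
  using \<open>k \<le> n\<close>
proof (induction k)
  case 0
  then show ?case using is_norm_on_zero[OF N] by simp
next
  case (Suc k)
  let ?y = "\<lambda>j. if j < k then x j else 0"
  have y: "?y \<in> vecs n" and e: "unit_vec k \<in> vecs n"
    using Suc.prems by (auto simp: vecs_def unit_vec_def)
  have z: "(\<lambda>j. x k * unit_vec k j) \<in> vecs n"
    using e by (simp add: vecs_def)
  have "(\<lambda>j. if j < Suc k then x j else 0) = (\<lambda>j. ?y j + x k * unit_vec k j)"
    by (auto simp: unit_vec_def less_Suc_eq)
  then have "f (\<lambda>j. if j < Suc k then x j else 0) \<le> f ?y + f (\<lambda>j. x k * unit_vec k j)"
    using is_norm_on_triangle[OF N y z] by simp
  also have "\<dots> = f ?y + \<bar>x k\<bar> * f (unit_vec k)"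
    using is_norm_on_scale[OF N e] by simp
  also have "f ?y \<le> (\<Sum>i<k. \<bar>x i\<bar> * f (unit_vec i))"
    using Suc by simp
  finally show ?case
    by simp
qed

lemma is_norm_on_le_l1:
  assumes N: "is_norm_on n f"
  obtains M where "0 \<le> M" "\<And>x. x \<in> vecs n \<Longrightarrow> f x \<le> M * l1 n x"
proof -
  define M where "M = (\<Sum>i<n. f (unit_vec i))"
  have e: "unit_vec i \<in> vecs n" if "i < n" for i
    using that by (simp add: vecs_def unit_vec_def)
  have "f (unit_vec i) \<le> M" if "i < n" for i
    unfolding M_def using that is_norm_on_nonneg[OF N e] by (intro member_le_sum) auto
  then have le: "f x \<le> M * l1 n x" if x: "x \<in> vecs n" for x
  proof -
    have "x = (\<lambda>j. if j < n then x j else 0)"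
      using x by (auto simp: vecs_def)
    then have "f x \<le> (\<Sum>i<n. \<bar>x i\<bar> * f (unit_vec i))"
      using is_norm_on_truncation_le[OF N order_refl, of x] by simp
    also have "\<dots> \<le> (\<Sum>i<n. \<bar>x i\<bar> * M)"
      using \<open>\<And>i. i < n \<Longrightarrow> f (unit_vec i) \<le> M\<close> by (intro sum_mono mult_left_mono) auto
    finally show ?thesis
      by (simp add: l1_def sum_distrib_left mult.commute)
  qed
  have "0 \<le> M"
    unfolding M_def using is_norm_on_nonneg[OF N e] by (intro sum_nonneg) auto
  with le show ?thesis using that by blast
qed

lemma is_norm_on_continuous:
  assumes N: "is_norm_on n f"
  shows "continuous_on (vecs n) f"
  unfolding continuous_on_def
proof
  obtain M where M: "0 \<le> M" "\<And>x. x \<in> vecs n \<Longrightarrow> f x \<le> M * l1 n x"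
    using is_norm_on_le_l1[OF N] by blast
  fix y assume y: "y \<in> vecs n"
  let ?d = "\<lambda>x. M * l1 n (\<lambda>i. x i - y i)"
  have lip: "\<bar>f x - f y\<bar> \<le> ?d x" if x: "x \<in> vecs n" for x
  proof -
    have xy: "(\<lambda>i. x i - y i) \<in> vecs n" and yx: "(\<lambda>i. y i - x i) \<in> vecs n"
      using x y by (auto simp: vecs_def)
    have "f (\<lambda>i. y i - x i) = f (\<lambda>i. x i - y i)"
      using is_norm_on_scale[OF N xy, of "-1"] by simp
    moreover have "f x \<le> f y + f (\<lambda>i. x i - y i)" "f y \<le> f x + f (\<lambda>i. y i - x i)"
      using is_norm_on_triangle[OF N y xy] is_norm_on_triangle[OF N x yx] by simp_all
    ultimately show ?thesis
      using M(2)[OF xy] by (simp add: abs_le_iff)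
  qed
  have "((\<lambda>x. l1 n (\<lambda>i. x i - y i)) \<longlongrightarrow> l1 n (\<lambda>i. y i - y i)) (at y within vecs n)"
    using continuous_on_l1_diff[of "vecs n" n y] y unfolding continuous_on_def by blast
  then have "(?d \<longlongrightarrow> 0) (at y within vecs n)"
    using tendsto_mult_right_zero by (fastforce simp: l1_def)
  moreover have "\<forall>\<^sub>F x in at y within vecs n. norm (f x - f y) \<le> norm (?d x) * 1"
    unfolding eventually_at_filter
    using lip M(1) l1_nonneg by (intro always_eventually) (simp add: abs_mult)
  ultimately have "((\<lambda>x. f x - f y) \<longlongrightarrow> 0) (at y within vecs n)"
    by (rule tendsto_0_le)
  then show "(f \<longlongrightarrow> f y) (at y within vecs n)"
    using Lim_null by blast
qed

lemma closed_vecs: "closed (vecs n)"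
proof -
  have "vecs n = (\<Inter>i\<in>{n..}. {x. x i = 0})"
    by (auto simp: vecs_def)
  then show ?thesis
    by (simp add: closed_INT closed_Collect_eq continuous_on_product_coordinates)
qed

lemma compact_l1_sphere: "compact {x \<in> vecs n. l1 n x = 1}"
proof -
  let ?box = "PiE UNIV (\<lambda>i. if i < n then {-1..1::real} else {0})"
  have "compactin (product_topology (\<lambda>_. euclidean) UNIV) ?box"
    by (subst compactin_PiE) auto
  then have box: "compact ?box"
    by (simp add: euclidean_product_topology compactin_euclidean_iff)
  have closed: "closed {x \<in> vecs n. l1 n x = 1}"
  proof -
    have "closed {x. l1 n x = 1}"
      by (intro closed_Collect_eq continuous_on_l1 continuous_on_const)
    moreover have "{x \<in> vecs n. l1 n x = 1} = vecs n \<inter> {x. l1 n x = 1}"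
      by blast
    ultimately show ?thesis
      using closed_Int[OF closed_vecs] by metis
  qed
  have "x \<in> ?box" if "x \<in> vecs n" "l1 n x = 1" for x
  proof -
    have "x i \<in> (if i < n then {-1..1} else {0})" for i
      using that abs_le_l1[of i n x] by (auto simp: vecs_def abs_le_iff)
    then show ?thesis
      by (simp add: PiE_UNIV_domain)
  qed
  then have "{x \<in> vecs n. l1 n x = 1} = ?box \<inter> {x \<in> vecs n. l1 n x = 1}"
    by blast
  then show ?thesis
    using compact_Int_closed[OF box closed] by simp
qed

lemma is_norm_on_ge_l1:
  assumes N: "is_norm_on n f"
  obtains c where "0 < c" "\<And>x. x \<in> vecs n \<Longrightarrow> c * l1 n x \<le> f x"
proof (cases "n = 0")
  case True
  then show ?thesis
    using that[of 1] is_norm_on_nonneg[OF N] by (simp add: l1_def)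
next
  case False
  let ?S = "{x \<in> vecs n. l1 n x = 1}"
  have "unit_vec 0 \<in> ?S"
    using False by (simp add: vecs_def unit_vec_def l1_def)
  then obtain x0 where x0: "x0 \<in> ?S" "\<And>x. x \<in> ?S \<Longrightarrow> f x0 \<le> f x"
    using continuous_attains_inf[OF compact_l1_sphere _
        continuous_on_subset[OF is_norm_on_continuous[OF N]]] by blast
  have "x0 \<noteq> (\<lambda>_. 0)"
    using x0(1) by (auto simp: l1_def)
  then have pos: "0 < f x0"
    using is_norm_on_nonneg[OF N] is_norm_on_eq_0_iff[OF N] x0(1) by (simp add: order_less_le)
  have "f x0 * l1 n x \<le> f x" if x: "x \<in> vecs n" for x
  proof (cases "l1 n x = 0")
    case True
    then show ?thesis using is_norm_on_nonneg[OF N x] by simp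
  next
    case False
    then have l: "0 < l1 n x"
      using l1_nonneg[of n x] by simp
    have "(\<lambda>i. (1 / l1 n x) * x i) \<in> ?S"
      using x l by (simp add: vecs_def l1_def abs_mult sum_divide_distrib[symmetric])
    then have "f x0 \<le> f (\<lambda>i. (1 / l1 n x) * x i)"
      by (rule x0(2))
    also have "\<dots> = f x / l1 n x"
      using is_norm_on_scale[OF N x, of "1 / l1 n x"] l by simp
    finally show ?thesis
      using l by (simp add: le_divide_eq mult.commute)
  qed
  with pos show ?thesis
    using that by blast
qed

definition support_fun :: "nat \<Rightarrow> (nat \<Rightarrow> real) set \<Rightarrow> (nat \<Rightarrow> real) \<Rightarrow> real" where
  "support_fun n K G = (SUP x\<in>K. \<Sum>i<n. G i * x i)"

lemma support_fun_restrict: "support_fun n K (\<lambda>i\<in>{..<n}. G i) = support_fun n K G"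
  unfolding support_fun_def by (intro SUP_cong refl sum.cong) auto

lemma inner_le_l1_bound:
  assumes "l1 n x \<le> B"
  shows "(\<Sum>i<n. G i * x i) \<le> B * (\<Sum>i<n. \<bar>G i\<bar>)"
  and "- (B * (\<Sum>i<n. \<bar>G i\<bar>)) \<le> (\<Sum>i<n. G i * x i)"
proof -
  have "(\<Sum>i<n. \<bar>G i\<bar>) * l1 n x \<le> (\<Sum>i<n. \<bar>G i\<bar>) * B"
    using assms by (intro mult_left_mono) (simp_all add: sum_nonneg)
  then show "(\<Sum>i<n. G i * x i) \<le> B * (\<Sum>i<n. \<bar>G i\<bar>)"
    and "- (B * (\<Sum>i<n. \<bar>G i\<bar>)) \<le> (\<Sum>i<n. G i * x i)"
    using abs_inner_le_l1[of G x n] by (simp_all add: mult.commute abs_le_iff)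
qed

context
  fixes n :: nat and K :: "(nat \<Rightarrow> real) set" and B :: real
  assumes K_nonempty: "K \<noteq> {}" and K_l1_bounded: "\<And>x. x \<in> K \<Longrightarrow> l1 n x \<le> B"
begin

lemma bdd_above_inner_image: "bdd_above ((\<lambda>x. \<Sum>i<n. G i * x i) ` K)"
  using inner_le_l1_bound(1)[OF K_l1_bounded] by (rule bdd_aboveI2)

lemma inner_le_support_fun: "x \<in> K \<Longrightarrow> (\<Sum>i<n. G i * x i) \<le> support_fun n K G"
  unfolding support_fun_def by (rule cSUP_upper[OF _ bdd_above_inner_image])

lemma abs_support_fun_le: "\<bar>support_fun n K G\<bar> \<le> B * (\<Sum>i<n. \<bar>G i\<bar>)"
proof -
  obtain x0 where "x0 \<in> K"
    using K_nonempty by blast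
  then have "- (B * (\<Sum>i<n. \<bar>G i\<bar>)) \<le> support_fun n K G"
    using inner_le_l1_bound(2)[OF K_l1_bounded] inner_le_support_fun order_trans by blast
  moreover have "support_fun n K G \<le> B * (\<Sum>i<n. \<bar>G i\<bar>)"
    unfolding support_fun_def
    using inner_le_l1_bound(1)[OF K_l1_bounded] by (rule cSUP_least[OF K_nonempty])
  ultimately show ?thesis
    by (simp add: abs_le_iff)
qed

lemma support_fun_dense_subset:
  assumes T: "T \<subseteq> K" "K \<subseteq> closure T"
  shows "support_fun n K G = support_fun n T G"
proof -
  have T_nonempty: "T \<noteq> {}"
    using T(2) K_nonempty by auto
  have bdd_T: "bdd_above ((\<lambda>x. \<Sum>i<n. G i * x i) ` T)"
    by (rule bdd_above_mono[OF bdd_above_inner_image[of G]]) (use T(1) in blast)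
  have "closed {x. (\<Sum>i<n. G i * x i) \<le> support_fun n T G}"
    by (intro closed_Collect_le continuous_on_const) (intro continuous_intros)
  moreover have "T \<subseteq> {x. (\<Sum>i<n. G i * x i) \<le> support_fun n T G}"
    unfolding support_fun_def using cSUP_upper[OF _ bdd_T] by blast
  ultimately have "closure T \<subseteq> {x. (\<Sum>i<n. G i * x i) \<le> support_fun n T G}"
    by (rule closure_minimal[rotated])
  then have "support_fun n K G \<le> support_fun n T G"
    unfolding support_fun_def[of n K] using T(2) by (intro cSUP_least[OF K_nonempty]) blast
  moreover have "support_fun n T G \<le> support_fun n K G"
    unfolding support_fun_def
    by (rule cSUP_subset_mono[OF T_nonempty bdd_above_inner_image[of G] T(1) order_refl])
  ultimately show ?thesis
    by (rule antisym)
qed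

end

lemma prob_space_std_normal: "prob_space (density lborel std_normal_density)"
  by (rule prob_space_normal_density) simp

lemma measurable_gauss_coordinate:
  assumes "i < n"
  shows "(\<lambda>G. G i) \<in> measurable (gauss n) (density lborel std_normal_density)"
  unfolding gauss_def using assms by (intro measurable_component_singleton) auto

lemma borel_measurable_gauss_inner: "(\<lambda>G. \<Sum>i<n. G i * x i) \<in> borel_measurable (gauss n)"
proof -
  have "(\<lambda>G. G i) \<in> borel_measurable (gauss n)" if "i < n" for i
    using measurable_gauss_coordinate[OF that]
    by (simp add: measurable_cong_sets[OF refl sets_density])
  then show ?thesis
    by (intro borel_measurable_sum borel_measurable_times) auto
qed

lemma integrable_gauss_abs_coordinate:
  assumes "i < n"
  shows "integrable (gauss n) (\<lambda>G. \<bar>G i\<bar>)"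
proof -
  have "distr (gauss n) (density lborel std_normal_density) (\<lambda>G. G i)
      = density lborel std_normal_density"
    unfolding gauss_def using assms prob_space_std_normal by (intro distr_PiM_component) auto
  moreover have "integrable (density lborel std_normal_density) (\<lambda>x. \<bar>x\<bar>)"
    using integrable_std_normal_moment_abs[of 1]
    by (subst integrable_density) (auto simp: normal_density_nonneg)
  ultimately show ?thesis
    using integrable_distr[OF measurable_gauss_coordinate[OF assms], of "\<lambda>x. \<bar>x\<bar>"] by simp
qed

lemma integrable_support_fun:
  assumes "K \<noteq> {}" and "\<And>x. x \<in> K \<Longrightarrow> l1 n x \<le> B"
  shows "integrable (gauss n) (support_fun n K)"
proof (rule Bochner_Integration.integrable_bound)
  show "integrable (gauss n) (\<lambda>G. B * (\<Sum>i<n. \<bar>G i\<bar>))"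
    by (intro integrable_mult_right Bochner_Integration.integrable_sum
        integrable_gauss_abs_coordinate) simp
  obtain T where T: "countable T" "T \<subseteq> K" "K \<subseteq> closure T"
    by (rule separable)
  then have "T \<noteq> {}"
    using assms(1) by auto
  moreover have "\<And>x. x \<in> T \<Longrightarrow> l1 n x \<le> B"
    using T(2) assms(2) by blast
  ultimately have "(\<lambda>G. SUP x\<in>T. \<Sum>i<n. G i * x i) \<in> borel_measurable (gauss n)"
    by (intro borel_measurable_cSUP[OF T(1) borel_measurable_gauss_inner] bdd_above_inner_image)
  then show "support_fun n K \<in> borel_measurable (gauss n)"
    using support_fun_dense_subset[OF assms T(2,3)] by (simp add: support_fun_def[abs_def])
  show "AE G in gauss n. norm (support_fun n K G) \<le> norm (B * (\<Sum>i<n. \<bar>G i\<bar>))"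
    using order_trans[OF abs_support_fun_le[OF assms] abs_ge_self]
    by (intro always_eventually allI) simp
qed

lemma
  fixes F :: "(nat \<Rightarrow> real) \<Rightarrow> real"
  assumes "inj_on k {..<m}" and "\<And>i. i < m \<Longrightarrow> k i < N" and "integrable (gauss m) F"
  shows integrable_gauss_reindex: "integrable (gauss N) (\<lambda>G. F (\<lambda>i\<in>{..<m}. G (k i)))"
    and integral_gauss_reindex:
      "integral\<^sup>L (gauss N) (\<lambda>G. F (\<lambda>i\<in>{..<m}. G (k i))) = integral\<^sup>L (gauss m) F"
proof -
  let ?reindex = "\<lambda>G. \<lambda>i\<in>{..<m}. G (k i)"
  have distr: "distr (gauss N) (gauss m) ?reindex = gauss m"
    using distr_PiM_reindex[of "{..<N}" "\<lambda>_. density lborel std_normal_density" k "{..<m}"]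
      prob_space_std_normal assms(1,2)
    unfolding gauss_def by auto
  have meas: "?reindex \<in> measurable (gauss N) (gauss m)"
    unfolding gauss_def
    by (intro measurable_restrict measurable_component_singleton) (use assms(2) in auto)
  show "integrable (gauss N) (\<lambda>G. F (?reindex G))"
    using assms(3) distr Bochner_Integration.integrable_distr[OF meas, of F] by simp
  show "integral\<^sup>L (gauss N) (\<lambda>G. F (?reindex G)) = integral\<^sup>L (gauss m) F"
    using integral_distr[OF meas borel_measurable_integrable[OF assms(3)]] distr by simp
qed

lemma zero_in_norm_ball: "is_norm_on n f \<Longrightarrow> (\<lambda>_. 0) \<in> norm_ball n f"
  by (simp add: norm_ball_def is_norm_on_zero)

lemma norm_ball_l1_bounded:
  assumes N: "is_norm_on n f"
  obtains B where "\<And>x. x \<in> norm_ball n f \<Longrightarrow> l1 n x \<le> B"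
proof -
  obtain c where c: "0 < c" "\<And>x. x \<in> vecs n \<Longrightarrow> c * l1 n x \<le> f x"
    using is_norm_on_ge_l1[OF N] by blast
  have "l1 n x \<le> 1 / c" if "x \<in> norm_ball n f" for x
  proof -
    have "c * l1 n x \<le> 1"
      using c(2)[of x] that by (auto simp: norm_ball_def)
    then show ?thesis
      using c(1) by (simp add: le_divide_eq mult.commute)
  qed
  then show ?thesis
    using that by blast
qed

lemma
  assumes "is_norm_on n f"
  shows integrable_support_fun_norm_ball: "integrable (gauss n) (support_fun n (norm_ball n f))"
    and inner_le_support_fun_norm_ball:
      "x \<in> norm_ball n f \<Longrightarrow> (\<Sum>i<n. G i * x i) \<le> support_fun n (norm_ball n f) G"
proof -
  obtain B where B: "\<And>x. x \<in> norm_ball n f \<Longrightarrow> l1 n x \<le> B"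
    using norm_ball_l1_bounded[OF assms] by blast
  have nonempty: "norm_ball n f \<noteq> {}"
    using zero_in_norm_ball[OF assms] by blast
  show "integrable (gauss n) (support_fun n (norm_ball n f))"
    by (rule integrable_support_fun[OF nonempty B])
  show "x \<in> norm_ball n f \<Longrightarrow> (\<Sum>i<n. G i * x i) \<le> support_fun n (norm_ball n f) G"
    by (rule inner_le_support_fun[OF nonempty B])
qed

lemma support_fun_norm_ball_nonneg: "is_norm_on n f \<Longrightarrow> 0 \<le> support_fun n (norm_ball n f) G"
  using inner_le_support_fun_norm_ball[OF _ zero_in_norm_ball] by fastforce

lemma inner_le_norm_mult_support_fun:
  assumes N: "is_norm_on n f" and x: "x \<in> vecs n"
  shows "(\<Sum>i<n. G i * x i) \<le> f x * support_fun n (norm_ball n f) G"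
proof (cases "f x = 0")
  case True
  then show ?thesis
    using is_norm_on_eq_0_iff[OF N x] support_fun_norm_ball_nonneg[OF N] by simp
next
  case False
  then have pos: "0 < f x"
    using is_norm_on_nonneg[OF N x] by simp
  have "f (\<lambda>i. (1 / f x) * x i) = 1"
    using is_norm_on_scale[OF N x, of "1 / f x"] pos by simp
  then have "(\<lambda>i. (1 / f x) * x i) \<in> norm_ball n f"
    using x by (simp add: norm_ball_def vecs_def)
  then have "(\<Sum>i<n. G i * x i) / f x \<le> support_fun n (norm_ball n f) G"
    using inner_le_support_fun_norm_ball[OF N]
    by (fastforce simp: sum_divide_distrib)
  then show ?thesis
    using pos by (simp add: divide_le_eq mult.commute)
qed

lemma gaussian_width_norm_ball:
  "is_norm_on n f \<Longrightarrow>
    gaussian_width n (norm_ball n f) = integral\<^sup>L (gauss n) (support_fun n (norm_ball n f))"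
  using zero_in_norm_ball by (force simp: gaussian_width_def support_fun_def[abs_def])

lemma gaussian_width_norm_ball_nonneg: "is_norm_on n f \<Longrightarrow> 0 \<le> gaussian_width n (norm_ball n f)"
  by (simp add: gaussian_width_norm_ball support_fun_norm_ball_nonneg)

lemma
  assumes "is_norm_on m g" and "k + m \<le> N"
  shows integrable_support_fun_block:
      "integrable (gauss N) (\<lambda>G. support_fun m (norm_ball m g) (\<lambda>i\<in>{..<m}. G (k + i)))"
    and integral_support_fun_block:
      "integral\<^sup>L (gauss N) (\<lambda>G. support_fun m (norm_ball m g) (\<lambda>i\<in>{..<m}. G (k + i)))
        = gaussian_width m (norm_ball m g)"
  using integrable_gauss_reindex[of "\<lambda>i. k + i" m N, OF _ _ integrable_support_fun_norm_ball]
    integral_gauss_reindex[of "\<lambda>i. k + i" m N, OF _ _ integrable_support_fun_norm_ball]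
    assms by (simp_all add: gaussian_width_norm_ball)

lemma gaussian_width_le_integral_majorant:
  assumes "integrable (gauss N) h" and "0 \<le> integral\<^sup>L (gauss N) h"
    and "\<And>z G. z \<in> K \<Longrightarrow> (\<Sum>i<N. G i * z i) \<le> h G"
  shows "gaussian_width N K \<le> integral\<^sup>L (gauss N) h"
proof (cases "K = {}")
  case True
  then show ?thesis
    using assms(2) by (simp add: gaussian_width_def)
next
  case False
  let ?sup = "\<lambda>G. SUP z\<in>K. \<Sum>i<N. G i * z i"
  have "?sup G \<le> h G" for G
    using assms(3) by (rule cSUP_least[OF False])
  \<comment> \<open>a non-integrable supremum has Bochner integral 0\<close>
  then have "integral\<^sup>L (gauss N) ?sup \<le> integral\<^sup>L (gauss N) h"
    using assms(1,2)
    by (cases "integrable (gauss N) ?sup") (simp_all add: integral_mono not_integrable_integral_eq)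
  then show ?thesis
    using False by (simp add: gaussian_width_def)
qed

lemma l2_le_1:
  assumes "(l2 n a)\<^sup>2 + t\<^sup>2 = 1"
  shows "l2 n a \<le> 1"
proof (rule power2_le_imp_le)
  show "(l2 n a)\<^sup>2 \<le> 1\<^sup>2"
    using assms zero_le_power2[of t] unfolding power_one by linarith
qed simp

lemma cone_sphere_memE:
  assumes z: "z \<in> cone_sphere n m f g C lam1 lam2 ax av"
    and f: "is_norm_on n f" and g: "is_norm_on m g"
    and "0 \<le> C" "0 < lam1" "0 < lam2" "0 \<le> ax" "0 \<le> av"
  obtains a b where "z = concat_vec n a b" "a \<in> vecs n" "b \<in> vecs m"
    "f a \<le> C * (ax + lam2 * av / lam1)" "g b \<le> C * (av + lam1 * ax / lam2)"
proof -
  obtain a b where ab: "z = concat_vec n a b" "a \<in> vecs n" "b \<in> vecs m"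
    and cone: "lam1 * f a + lam2 * g b \<le> C * lam1 * ax * l2 n a + C * lam2 * av * l2 m b"
    and sphere: "(l2 n a)\<^sup>2 + (l2 m b)\<^sup>2 = 1"
    using z unfolding cone_sphere_def by blast
  have "C * lam1 * ax * l2 n a \<le> C * lam1 * ax" "C * lam2 * av * l2 m b \<le> C * lam2 * av"
    using l2_le_1[OF sphere] l2_le_1[of m b "l2 n a"] sphere assms(4-)
    by (simp_all add: mult_left_le add.commute)
  with cone have sum: "lam1 * f a + lam2 * g b \<le> C * lam1 * ax + C * lam2 * av"
    by linarith
  have "lam1 * (C * (ax + lam2 * av / lam1)) = C * lam1 * ax + C * lam2 * av"
    "lam2 * (C * (av + lam1 * ax / lam2)) = C * lam1 * ax + C * lam2 * av"
    using assms(5,6) by (simp_all add: field_simps)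
  moreover have "0 \<le> lam1 * f a" "0 \<le> lam2 * g b"
    using is_norm_on_nonneg[OF f ab(2)] is_norm_on_nonneg[OF g ab(3)] assms(5,6) by simp_all
  ultimately have "lam1 * f a \<le> lam1 * (C * (ax + lam2 * av / lam1))"
    "lam2 * g b \<le> lam2 * (C * (av + lam1 * ax / lam2))"
    using sum by linarith+
  then show ?thesis
    using that ab assms(5,6) by simp
qed

lemma inner_concat_vec:
  "(\<Sum>i<n + m. G i * concat_vec n a b i) = (\<Sum>i<n. G i * a i) + (\<Sum>i<m. G (n + i) * b i)"
  by (induction m) (simp_all add: concat_vec_def cong: sum.cong_simp)

lemma inner_concat_vec_le_support_funs:
  assumes f: "is_norm_on n f" and g: "is_norm_on m g"
    and a: "a \<in> vecs n" "f a \<le> R1" and b: "b \<in> vecs m" "g b \<le> R2"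
  shows "(\<Sum>i<n + m. G i * concat_vec n a b i)
    \<le> R1 * support_fun n (norm_ball n f) (\<lambda>i\<in>{..<n}. G i)
      + R2 * support_fun m (norm_ball m g) (\<lambda>i\<in>{..<m}. G (n + i))"
proof -
  have "(\<Sum>i<n. G i * a i) \<le> f a * support_fun n (norm_ball n f) G"
    by (rule inner_le_norm_mult_support_fun[OF f a(1)])
  also have "\<dots> \<le> R1 * support_fun n (norm_ball n f) (\<lambda>i\<in>{..<n}. G i)"
    using a(2) support_fun_norm_ball_nonneg[OF f]
    by (simp add: support_fun_restrict mult_right_mono)
  finally have "(\<Sum>i<n. G i * a i) \<le> R1 * support_fun n (norm_ball n f) (\<lambda>i\<in>{..<n}. G i)" .
  moreover have "(\<Sum>i<m. G (n + i) * b i) \<le> g b * support_fun m (norm_ball m g) (\<lambda>i. G (n + i))"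
    by (rule inner_le_norm_mult_support_fun[OF g b(1)])
  moreover have "\<dots> \<le> R2 * support_fun m (norm_ball m g) (\<lambda>i\<in>{..<m}. G (n + i))"
    using b(2) support_fun_norm_ball_nonneg[OF g]
    by (simp add: support_fun_restrict[of m _ "\<lambda>i. G (n + i)"] mult_right_mono)
  ultimately show ?thesis
    by (simp add: inner_concat_vec)
qed

lemma gaussian_width_cone_sphere_le:
  assumes "0 \<le> C" and f: "is_norm_on n f" and g: "is_norm_on m g"
    and pos: "0 < lam1" "0 < lam2" "0 \<le> ax" "0 \<le> av"
  shows "gaussian_width (n + m) (cone_sphere n m f g C lam1 lam2 ax av)
    \<le> C * ((ax + lam2 * av / lam1) * gaussian_width n (norm_ball n f)
          + (av + lam1 * ax / lam2) * gaussian_width m (norm_ball m g))"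
proof -
  define R1 where "R1 = C * (ax + lam2 * av / lam1)"
  define R2 where "R2 = C * (av + lam1 * ax / lam2)"
  define h where "h G = R1 * support_fun n (norm_ball n f) (\<lambda>i\<in>{..<n}. G i)
    + R2 * support_fun m (norm_ball m g) (\<lambda>i\<in>{..<m}. G (n + i))" for G
  have integrable: "integrable (gauss (n + m)) h"
    using integrable_support_fun_block[OF f, of 0 "n + m"]
      integrable_support_fun_block[OF g, of n "n + m"]
    by (simp add: h_def[abs_def])
  have integral: "integral\<^sup>L (gauss (n + m)) h
      = R1 * gaussian_width n (norm_ball n f) + R2 * gaussian_width m (norm_ball m g)"
    using integrable_support_fun_block[OF f, of 0 "n + m"]
      integrable_support_fun_block[OF g, of n "n + m"]
      integral_support_fun_block[OF f, of 0 "n + m"] integral_support_fun_block[OF g, of n "n + m"]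
    by (simp add: h_def[abs_def])
  have "0 \<le> R1" "0 \<le> R2"
    using assms by (simp_all add: R1_def R2_def)
  then have "0 \<le> integral\<^sup>L (gauss (n + m)) h"
    using integral gaussian_width_norm_ball_nonneg[OF f] gaussian_width_norm_ball_nonneg[OF g] by simp
  moreover have "(\<Sum>i<n + m. G i * z i) \<le> h G"
    if z: "z \<in> cone_sphere n m f g C lam1 lam2 ax av" for z G
  proof -
    obtain a b where "z = concat_vec n a b" "a \<in> vecs n" "b \<in> vecs m" "f a \<le> R1" "g b \<le> R2"
      using cone_sphere_memE[OF z f g assms(1) pos] unfolding R1_def R2_def by blast
    then show ?thesis
      unfolding h_def by (simp add: inner_concat_vec_le_support_funs[OF f g])
  qed
  ultimately have "gaussian_width (n + m) (cone_sphere n m f g C lam1 lam2 ax av)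
      \<le> integral\<^sup>L (gauss (n + m)) h"
    using integrable by (intro gaussian_width_le_integral_majorant)
  then show ?thesis
    unfolding integral by (simp add: R1_def R2_def algebra_simps)
qed

theorem propositionA8:
  fixes C :: real
  assumes "C > 0"
  shows "\<exists>C'::real. \<forall>(n::nat) (m::nat) f g (lam1::real) (lam2::real) (ax::real) (av::real).
           is_norm_on n f \<and> is_norm_on m g \<and>
           lam1 > 0 \<and> lam2 > 0 \<and> ax > 0 \<and> av > 0 \<longrightarrow>
           gaussian_width (n + m) (cone_sphere n m f g C lam1 lam2 ax av)
             \<le> C' * ((ax + lam2 * av / lam1) * gaussian_width n (norm_ball n f)
                    + (av + lam1 * ax / lam2) * gaussian_width m (norm_ball m g))"
  using gaussian_width_cone_sphere_le assms by (intro exI[of _ C]) auto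

end
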